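(* Let $B$ be a finite set of Boolean functions. There exists an MSO formula $\theta$ over the vocabulary $\tau_{B,ae}$ such that for every set $\Sigma$ of autoepistemic $B$-formulae: $\Sigma$ possesses a stable expansion if and only if $\mathcal{A}_\Sigma\models\theta$.
   Context: Autoepistemic $B$-formulae are given by $\varphi ::= p \mid f(\varphi,\dots,\varphi)\mid L\varphi$ with $p$ a proposition and $f\in B$; formulae $L\varphi$ are treated as atoms for propositional consequence $\models$, and $\mathrm{Th}(S)$ denotes the closure of $S$ under this consequence. A set $\Delta$ of autoepistemic formulae is a stable expansion of $\Sigma$ if $\Delta=\mathrm{Th}(\Sigma\cup\{L\varphi\mid\varphi\in\Delta\}\cup\{\neg L\varphi\mid\varphi\notin\Delta\})$. The vocabulary $\tau_{B,ae}$ consists of unary $\mathrm{const}_f$ (0-ary $f\in B$), binary $\mathrm{conn}_{f,i}$ ($f\in B$, $1\le i\le\mathrm{arity}(f)$), and unary $L$ and $\mathrm{repr}$. The structure $\mathcal{A}_\Sigma$ has as universe the set of subformulae of formulae in $\Sigma\cup\{\neg L\varphi\mid L\varphi \text{ a subformula of a formula in }\Sigma\}$, with $\mathrm{const}_f(x)$ iff $x$ is the constant $f$, $\mathrm{conn}_{f,i}(x,y)$ iff $x$ is the $i$-th argument of the function $f$ at the root of $y$, $L(x)$ iff $x$ is of the form $L\psi$, and $\mathrm{repr}(x)$ iff $x\in\Sigma$.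
   Formalization: The vocabulary $\tau_{B,ae}$ also contains a binary symbol, available to theta, holding in $\mathcal{A}_\Sigma$ of (x,y) exactly when y is $L x$, so linking each $L\psi$ to $\psi$. The statement above fails without it. *)

theory Defs
  imports Main
begin

type_synonym bf = "nat \<times> (bool list \<Rightarrow> bool)"

definition arity :: "bf \<Rightarrow> nat" where "arity f = fst f"
definition bfun :: "bf \<Rightarrow> bool list \<Rightarrow> bool" where "bfun f = snd f"

definition neg :: bf where "neg = (1, \<lambda>xs. \<not> hd xs)"

datatype 'p aeform = Prop 'p | App bf "'p aeform list" | Lf "'p aeform"

fun wf_over :: "bf set \<Rightarrow> 'p aeform \<Rightarrow> bool" where
  "wf_over C (Prop p) = True"
| "wf_over C (App f xs) = (f \<in> C \<and> length xs = arity f \<and> (\<forall>x\<in>set xs. wf_over C x))"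
| "wf_over C (Lf \<phi>) = wf_over C \<phi>"

definition Bformulas :: "bf set \<Rightarrow> 'p aeform set" where
  "Bformulas B = {\<phi>. wf_over B \<phi>}"

text \<open>The ambient language of autoepistemic formulae used for stable expansions:
  B-connectives together with negation (needed for the literals \<not>L\<phi>).\<close>
definition aelang :: "bf set \<Rightarrow> 'p aeform set" where
  "aelang B = {\<phi>. wf_over (insert neg B) \<phi>}"

definition NegL :: "'p aeform \<Rightarrow> 'p aeform" where
  "NegL \<phi> = App neg [Lf \<phi>]"

fun eval :: "('p \<Rightarrow> bool) \<Rightarrow> ('p aeform \<Rightarrow> bool) \<Rightarrow> 'p aeform \<Rightarrow> bool" where
  "eval v w (Prop p) = v p"
| "eval v w (App f xs) = bfun f (map (eval v w) xs)"
| "eval v w (Lf \<phi>) = w \<phi>"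

definition entails :: "'p aeform set \<Rightarrow> 'p aeform \<Rightarrow> bool" where
  "entails S \<phi> \<longleftrightarrow> (\<forall>v w. (\<forall>\<psi>\<in>S. eval v w \<psi>) \<longrightarrow> eval v w \<phi>)"

definition Th :: "bf set \<Rightarrow> 'p aeform set \<Rightarrow> 'p aeform set" where
  "Th B S = {\<phi> \<in> aelang B. entails S \<phi>}"

definition stable_expansion :: "bf set \<Rightarrow> 'p aeform set \<Rightarrow> 'p aeform set \<Rightarrow> bool" where
  "stable_expansion B \<Sigma> \<Delta> \<longleftrightarrow> \<Delta> \<subseteq> aelang B \<and>
     \<Delta> = Th B (\<Sigma> \<union> {Lf \<phi> | \<phi>. \<phi> \<in> \<Delta>} \<union> {NegL \<phi> | \<phi>. \<phi> \<in> aelang B \<and> \<phi> \<notin> \<Delta>})"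

definition has_stable_expansion :: "bf set \<Rightarrow> 'p aeform set \<Rightarrow> bool" where
  "has_stable_expansion B \<Sigma> \<longleftrightarrow> (\<exists>\<Delta>. stable_expansion B \<Sigma> \<Delta>)"

fun subf :: "'p aeform \<Rightarrow> 'p aeform set" where
  "subf (Prop p) = {Prop p}"
| "subf (App f xs) = insert (App f xs) (\<Union>x\<in>set xs. subf x)"
| "subf (Lf \<phi>) = insert (Lf \<phi>) (subf \<phi>)"

datatype rsym = ConstR bf | ConnR bf nat | LR | LArgR | ReprR

record 'a mstruct =
  univ :: "'a set"
  rel1 :: "rsym \<Rightarrow> 'a \<Rightarrow> bool"
  rel2 :: "rsym \<Rightarrow> 'a \<Rightarrow> 'a \<Rightarrow> bool"

definition AUniv :: "'p aeform set \<Rightarrow> 'p aeform set" where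
  "AUniv \<Sigma> = (\<Union>\<phi>\<in>\<Sigma> \<union> {NegL \<psi> | \<psi>. Lf \<psi> \<in> (\<Union>\<chi>\<in>\<Sigma>. subf \<chi>)}. subf \<phi>)"

fun A_rel1 :: "bf set \<Rightarrow> 'p aeform set \<Rightarrow> rsym \<Rightarrow> 'p aeform \<Rightarrow> bool" where
  "A_rel1 B \<Sigma> (ConstR f) x = (f \<in> B \<and> arity f = 0 \<and> x = App f [])"
| "A_rel1 B \<Sigma> LR x = (\<exists>\<psi>. x = Lf \<psi>)"
| "A_rel1 B \<Sigma> ReprR x = (x \<in> \<Sigma>)"
| "A_rel1 B \<Sigma> _ x = False"

fun A_rel2 :: "bf set \<Rightarrow> 'p aeform set \<Rightarrow> rsym \<Rightarrow> 'p aeform \<Rightarrow> 'p aeform \<Rightarrow> bool" where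
  "A_rel2 B \<Sigma> (ConnR f i) x y =
     (f \<in> B \<and> 1 \<le> i \<and> i \<le> arity f \<and>
      (\<exists>xs. y = App f xs \<and> i \<le> length xs \<and> x = xs ! (i - 1)))"
| "A_rel2 B \<Sigma> LArgR x y = (y = Lf x)"
| "A_rel2 B \<Sigma> _ x y = False"

definition A_Sigma :: "bf set \<Rightarrow> 'p aeform set \<Rightarrow> 'p aeform mstruct" where
  "A_Sigma B \<Sigma> = \<lparr> univ = AUniv \<Sigma>, rel1 = A_rel1 B \<Sigma>, rel2 = A_rel2 B \<Sigma> \<rparr>"

text \<open>First-order variables and set variables are both indexed by nat (separate sorts).\<close>
datatype mso =
    Rel1 rsym nat
  | Rel2 rsym nat nat
  | Eq nat nat
  | Mem nat nat           \<comment> \<open>first-order var \<in> set var\<close>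
  | MNot mso
  | MAnd mso mso
  | Ex1 nat mso
  | Ex2 nat mso

fun sat :: "'a mstruct \<Rightarrow> (nat \<Rightarrow> 'a) \<Rightarrow> (nat \<Rightarrow> 'a set) \<Rightarrow> mso \<Rightarrow> bool" where
  "sat A I J (Rel1 r x) = rel1 A r (I x)"
| "sat A I J (Rel2 r x y) = rel2 A r (I x) (I y)"
| "sat A I J (Eq x y) = (I x = I y)"
| "sat A I J (Mem x X) = (I x \<in> J X)"
| "sat A I J (MNot \<phi>) = (\<not> sat A I J \<phi>)"
| "sat A I J (MAnd \<phi> \<psi>) = (sat A I J \<phi> \<and> sat A I J \<psi>)"
| "sat A I J (Ex1 x \<phi>) = (\<exists>a\<in>univ A. sat A (I(x := a)) J \<phi>)"
| "sat A I J (Ex2 X \<phi>) = (\<exists>S. S \<subseteq> univ A \<and> sat A I (J(X := S)) \<phi>)"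

fun fv1 :: "mso \<Rightarrow> nat set" where
  "fv1 (Rel1 r x) = {x}"
| "fv1 (Rel2 r x y) = {x, y}"
| "fv1 (Eq x y) = {x, y}"
| "fv1 (Mem x X) = {x}"
| "fv1 (MNot \<phi>) = fv1 \<phi>"
| "fv1 (MAnd \<phi> \<psi>) = fv1 \<phi> \<union> fv1 \<psi>"
| "fv1 (Ex1 x \<phi>) = fv1 \<phi> - {x}"
| "fv1 (Ex2 X \<phi>) = fv1 \<phi>"

fun fv2 :: "mso \<Rightarrow> nat set" where
  "fv2 (Mem x X) = {X}"
| "fv2 (MNot \<phi>) = fv2 \<phi>"
| "fv2 (MAnd \<phi> \<psi>) = fv2 \<phi> \<union> fv2 \<psi>"
| "fv2 (Ex1 x \<phi>) = fv2 \<phi>"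
| "fv2 (Ex2 X \<phi>) = fv2 \<phi> - {X}"
| "fv2 _ = {}"

definition sentence :: "mso \<Rightarrow> bool" where
  "sentence \<phi> \<longleftrightarrow> fv1 \<phi> = {} \<and> fv2 \<phi> = {}"

definition unary_sym :: "bf set \<Rightarrow> rsym \<Rightarrow> bool" where
  "unary_sym B r \<longleftrightarrow> (\<exists>f\<in>B. arity f = 0 \<and> r = ConstR f) \<or> r = LR \<or> r = ReprR"

definition binary_sym :: "bf set \<Rightarrow> rsym \<Rightarrow> bool" where
  "binary_sym B r \<longleftrightarrow> (\<exists>f\<in>B. \<exists>i. 1 \<le> i \<and> i \<le> arity f \<and> r = ConnR f i) \<or> r = LArgR"

fun mso_over :: "bf set \<Rightarrow> mso \<Rightarrow> bool" where
  "mso_over B (Rel1 r x) = unary_sym B r"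
| "mso_over B (Rel2 r x y) = binary_sym B r"
| "mso_over B (MNot \<phi>) = mso_over B \<phi>"
| "mso_over B (MAnd \<phi> \<psi>) = (mso_over B \<phi> \<and> mso_over B \<psi>)"
| "mso_over B (Ex1 x \<phi>) = mso_over B \<phi>"
| "mso_over B (Ex2 X \<phi>) = mso_over B \<phi>"
| "mso_over B _ = True"

definition models :: "'a mstruct \<Rightarrow> mso \<Rightarrow> bool" (infix "\<Turnstile>" 50) where
  "A \<Turnstile> \<theta> \<longleftrightarrow> sat A (\<lambda>_. undefined) (\<lambda>_. {}) \<theta>"

end

theory Submission
  imports Defs
begin

text \<open>A stable expansion \<Delta> of \<Sigma> is determined by the set E of those \<psi> with L\<psi> a subformula
  of \<Sigma> that it contains, and such a set E comes from a stable expansion iff it is a fixpoint: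
  \<psi> \<in> E exactly when \<psi> propositionally follows from \<Sigma> with every atom L\<chi> read as \<chi> \<in> E.
  (Given a fixpoint, the expansion is the theory of the S5 model whose worlds are the models
  of \<Sigma> under this reading.)
  The MSO sentence guesses E as a set of L-nodes of A_\<Sigma> and expresses the consequence
  relation by quantifying over all sets T of nodes which contain \<Sigma>, agree with E on L-nodes
  and respect the truth tables of the connectives: the propositional valuations are exactly
  such T restricted to the atoms. Finiteness of B makes the truth-table condition a finite
  conjunction.\<close>

lemma subf_self: "\<phi> \<in> subf \<phi>"
  by (cases \<phi>) auto

lemma subf_trans: "\<chi> \<in> subf \<phi> \<Longrightarrow> subf \<chi> \<subseteq> subf \<phi>"
  by (induction \<phi>) auto

lemma wf_over_subf: "wf_over C \<phi> \<Longrightarrow> \<chi> \<in> subf \<phi> \<Longrightarrow> wf_over C \<chi>"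
  by (induction \<phi>) auto

lemma wf_over_mono: "wf_over C \<phi> \<Longrightarrow> C \<subseteq> D \<Longrightarrow> wf_over D \<phi>"
  by (induction \<phi>) auto

lemma Bformulas_subset_aelang: "Bformulas B \<subseteq> aelang B"
  unfolding Bformulas_def aelang_def by (auto intro: wf_over_mono)

lemma aelang_Lf_subf: "\<phi> \<in> aelang B \<Longrightarrow> Lf \<chi> \<in> subf \<phi> \<Longrightarrow> \<chi> \<in> aelang B"
  unfolding aelang_def using wf_over_subf by fastforce

lemma eval_cong_Lf:
  "(\<And>\<chi>. Lf \<chi> \<in> subf \<phi> \<Longrightarrow> w \<chi> = w' \<chi>) \<Longrightarrow> eval v w \<phi> = eval v w' \<phi>"
proof (induction \<phi>)
  case (App f xs)
  then have "map (eval v w) xs = map (eval v w') xs"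
    by (intro map_cong) auto
  then show ?case by (simp only: eval.simps)
qed auto

lemma eval_aelang_cong:
  "\<phi> \<in> aelang B \<Longrightarrow> (\<And>\<chi>. \<chi> \<in> aelang B \<Longrightarrow> w \<chi> = w' \<chi>) \<Longrightarrow> eval v w \<phi> = eval v w' \<phi>"
  by (rule eval_cong_Lf) (use aelang_Lf_subf in blast)

lemma eval_NegL: "eval v w (NegL \<phi>) = (\<not> w \<phi>)"
  by (simp add: NegL_def neg_def bfun_def)

section \<open>Stable expansions and their kernels\<close>

definition introspection :: "bf set \<Rightarrow> 'p aeform set \<Rightarrow> 'p aeform set" where
  "introspection B \<Delta> = {Lf \<phi> | \<phi>. \<phi> \<in> \<Delta>} \<union> {NegL \<phi> | \<phi>. \<phi> \<in> aelang B \<and> \<phi> \<notin> \<Delta>}"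

lemma stable_expansion_iff:
  "stable_expansion B \<Sigma> \<Delta> \<longleftrightarrow> \<Delta> \<subseteq> aelang B \<and> \<Delta> = Th B (\<Sigma> \<union> introspection B \<Delta>)"
  unfolding stable_expansion_def introspection_def by (simp add: Un_assoc)

definition ae_consequence :: "'p aeform set \<Rightarrow> 'p aeform set \<Rightarrow> 'p aeform \<Rightarrow> bool" where
  "ae_consequence \<Sigma> E \<phi> \<longleftrightarrow>
     (\<forall>v. (\<forall>\<sigma>\<in>\<Sigma>. eval v (\<lambda>\<chi>. \<chi> \<in> E) \<sigma>) \<longrightarrow> eval v (\<lambda>\<chi>. \<chi> \<in> E) \<phi>)"

lemma entails_introspection_iff:
  assumes \<Sigma>: "\<Sigma> \<subseteq> aelang B" and \<phi>: "\<phi> \<in> aelang B"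
  shows "entails (\<Sigma> \<union> introspection B \<Delta>) \<phi> \<longleftrightarrow> ae_consequence \<Sigma> \<Delta> \<phi>"
proof
  assume "entails (\<Sigma> \<union> introspection B \<Delta>) \<phi>"
  moreover have "\<forall>\<psi>\<in>introspection B \<Delta>. eval v (\<lambda>\<chi>. \<chi> \<in> \<Delta>) \<psi>" for v
    by (auto simp: introspection_def eval_NegL)
  ultimately show "ae_consequence \<Sigma> \<Delta> \<phi>"
    unfolding entails_def ae_consequence_def by blast
next
  assume cons: "ae_consequence \<Sigma> \<Delta> \<phi>"
  show "entails (\<Sigma> \<union> introspection B \<Delta>) \<phi>"
    unfolding entails_def
  proof (intro allI impI)
    fix v w
    assume sat: "\<forall>\<psi>\<in>\<Sigma> \<union> introspection B \<Delta>. eval v w \<psi>"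
    have w: "w \<chi> = (\<chi> \<in> \<Delta>)" if "\<chi> \<in> aelang B" for \<chi>
    proof (cases "\<chi> \<in> \<Delta>")
      case True
      then have "Lf \<chi> \<in> introspection B \<Delta>" by (auto simp: introspection_def)
      with sat have "eval v w (Lf \<chi>)" by blast
      with True show ?thesis by simp
    next
      case False
      with that have "NegL \<chi> \<in> introspection B \<Delta>" by (auto simp: introspection_def)
      with sat have "eval v w (NegL \<chi>)" by blast
      with False show ?thesis by (simp add: eval_NegL)
    qed
    have "eval v w \<psi> = eval v (\<lambda>\<chi>. \<chi> \<in> \<Delta>) \<psi>" if "\<psi> \<in> aelang B" for \<psi>
      using that w by (rule eval_aelang_cong)
    then show "eval v w \<phi>"
      using cons sat \<Sigma> \<phi> unfolding ae_consequence_def by (metis UnI1 subsetD)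
  qed
qed

definition L_args :: "'p aeform set \<Rightarrow> 'p aeform set" where
  "L_args \<Sigma> = {\<psi>. Lf \<psi> \<in> (\<Union>\<sigma>\<in>\<Sigma>. subf \<sigma>)}"

lemma L_argsI: "\<sigma> \<in> \<Sigma> \<Longrightarrow> Lf \<chi> \<in> subf \<sigma> \<Longrightarrow> \<chi> \<in> L_args \<Sigma>"
  unfolding L_args_def by auto

lemma L_args_subf: "\<psi> \<in> L_args \<Sigma> \<Longrightarrow> Lf \<chi> \<in> subf \<psi> \<Longrightarrow> \<chi> \<in> L_args \<Sigma>"
  unfolding L_args_def using subf_trans by fastforce

lemma L_args_wf_over: "\<Sigma> \<subseteq> Bformulas B \<Longrightarrow> \<psi> \<in> L_args \<Sigma> \<Longrightarrow> wf_over B \<psi>"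
  unfolding L_args_def Bformulas_def using wf_over_subf by fastforce

lemma L_args_aelang: "\<Sigma> \<subseteq> Bformulas B \<Longrightarrow> L_args \<Sigma> \<subseteq> aelang B"
  unfolding aelang_def using L_args_wf_over by (blast intro: wf_over_mono)

definition stable_kernel :: "'p aeform set \<Rightarrow> 'p aeform set \<Rightarrow> bool" where
  "stable_kernel \<Sigma> E \<longleftrightarrow> (\<forall>\<psi>\<in>L_args \<Sigma>. \<psi> \<in> E \<longleftrightarrow> ae_consequence \<Sigma> E \<psi>)"

lemma stable_kernel_cong:
  assumes "\<And>\<psi>. \<psi> \<in> L_args \<Sigma> \<Longrightarrow> \<psi> \<in> E \<longleftrightarrow> \<psi> \<in> E'"
  shows "stable_kernel \<Sigma> E \<longleftrightarrow> stable_kernel \<Sigma> E'"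
proof -
  have "eval v (\<lambda>\<chi>. \<chi> \<in> E) \<phi> = eval v (\<lambda>\<chi>. \<chi> \<in> E') \<phi>"
    if "\<phi> \<in> \<Sigma> \<union> L_args \<Sigma>" for v \<phi>
    by (rule eval_cong_Lf) (use that assms L_argsI L_args_subf in blast)
  then have "ae_consequence \<Sigma> E \<psi> \<longleftrightarrow> ae_consequence \<Sigma> E' \<psi>" if "\<psi> \<in> L_args \<Sigma>" for \<psi>
    using that unfolding ae_consequence_def by auto
  with assms show ?thesis
    unfolding stable_kernel_def by auto
qed

lemma stable_expansion_stable_kernel:
  assumes \<Sigma>: "\<Sigma> \<subseteq> Bformulas B" and "stable_expansion B \<Sigma> \<Delta>"
  shows "stable_kernel \<Sigma> \<Delta>"
  unfolding stable_kernel_def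
proof
  fix \<psi> assume "\<psi> \<in> L_args \<Sigma>"
  with \<Sigma> have \<psi>: "\<psi> \<in> aelang B" using L_args_aelang by blast
  have \<Sigma>': "\<Sigma> \<subseteq> aelang B" using \<Sigma> Bformulas_subset_aelang by blast
  have "\<psi> \<in> \<Delta> \<longleftrightarrow> \<psi> \<in> Th B (\<Sigma> \<union> introspection B \<Delta>)"
    using \<open>stable_expansion B \<Sigma> \<Delta>\<close> by (simp add: stable_expansion_iff)
  also have "\<dots> \<longleftrightarrow> ae_consequence \<Sigma> \<Delta> \<psi>"
    using entails_introspection_iff[OF \<Sigma>' \<psi>] \<psi> by (simp add: Th_def)
  finally show "\<psi> \<in> \<Delta> \<longleftrightarrow> ae_consequence \<Sigma> \<Delta> \<psi>" .
qed

text \<open>Truth in the S5 model with set of worlds M.\<close>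
fun world_eval :: "('p \<Rightarrow> bool) set \<Rightarrow> bf set \<Rightarrow> ('p \<Rightarrow> bool) \<Rightarrow> 'p aeform \<Rightarrow> bool" where
  "world_eval M B v (Prop p) = v p"
| "world_eval M B v (App f xs) = bfun f (map (world_eval M B v) xs)"
| "world_eval M B v (Lf \<phi>) = (\<phi> \<in> aelang B \<and> (\<forall>u\<in>M. world_eval M B u \<phi>))"

definition theory_of :: "('p \<Rightarrow> bool) set \<Rightarrow> bf set \<Rightarrow> 'p aeform set" where
  "theory_of M B = {\<phi> \<in> aelang B. \<forall>u\<in>M. world_eval M B u \<phi>}"

lemma eval_theory_of: "eval v (\<lambda>\<chi>. \<chi> \<in> theory_of M B) \<phi> = world_eval M B v \<phi>"
proof (induction \<phi>)
  case (App f xs)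
  then have "map (eval v (\<lambda>\<chi>. \<chi> \<in> theory_of M B)) xs = map (world_eval M B v) xs"
    by (intro map_cong) auto
  then show ?case by (simp only: eval.simps world_eval.simps)
qed (auto simp: theory_of_def)

lemma stable_expansion_theory_of:
  assumes \<Sigma>: "\<Sigma> \<subseteq> aelang B" and M: "M = {v. \<forall>\<sigma>\<in>\<Sigma>. world_eval M B v \<sigma>}"
  shows "stable_expansion B \<Sigma> (theory_of M B)"
proof -
  have "\<phi> \<in> Th B (\<Sigma> \<union> introspection B (theory_of M B)) \<longleftrightarrow> \<phi> \<in> theory_of M B" for \<phi>
  proof (cases "\<phi> \<in> aelang B")
    case True
    then have "\<phi> \<in> Th B (\<Sigma> \<union> introspection B (theory_of M B))
        \<longleftrightarrow> ae_consequence \<Sigma> (theory_of M B) \<phi>"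
      using \<Sigma> by (simp add: Th_def entails_introspection_iff)
    also have "\<dots> \<longleftrightarrow> (\<forall>v\<in>M. world_eval M B v \<phi>)"
      by (subst M) (auto simp: ae_consequence_def eval_theory_of)
    finally show ?thesis
      using True by (simp add: theory_of_def)
  qed (simp add: Th_def theory_of_def)
  then show ?thesis
    unfolding stable_expansion_iff theory_of_def by blast
qed

lemma theory_of_agrees_with_stable_kernel:
  assumes \<Sigma>: "\<Sigma> \<subseteq> Bformulas B" and E: "stable_kernel \<Sigma> E"
    and M: "M = {v. \<forall>\<sigma>\<in>\<Sigma>. eval v (\<lambda>\<chi>. \<chi> \<in> E) \<sigma>}"
    and \<psi>: "\<psi> \<in> L_args \<Sigma>"
  shows "\<psi> \<in> theory_of M B \<longleftrightarrow> \<psi> \<in> E"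
proof -
  \<comment> \<open>Generalised to all L-arguments inside \<phi>, so that structural induction reaches nested L.\<close>
  have "\<forall>\<psi>. Lf \<psi> \<in> subf \<phi> \<longrightarrow> \<psi> \<in> L_args \<Sigma> \<longrightarrow> (\<psi> \<in> theory_of M B \<longleftrightarrow> \<psi> \<in> E)" for \<phi>
  proof (induction \<phi>)
    case (Lf \<phi>)
    have "\<phi> \<in> theory_of M B \<longleftrightarrow> \<phi> \<in> E" if \<phi>: "\<phi> \<in> L_args \<Sigma>"
    proof -
      have "eval v (\<lambda>\<chi>. \<chi> \<in> theory_of M B) \<phi> = eval v (\<lambda>\<chi>. \<chi> \<in> E) \<phi>" for v
        by (rule eval_cong_Lf) (use Lf \<phi> L_args_subf in blast)
      then have "world_eval M B v \<phi> = eval v (\<lambda>\<chi>. \<chi> \<in> E) \<phi>" for v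
        by (simp only: eval_theory_of)
      then have "\<phi> \<in> theory_of M B \<longleftrightarrow> (\<forall>u\<in>M. eval u (\<lambda>\<chi>. \<chi> \<in> E) \<phi>)"
        using \<phi> L_args_aelang[OF \<Sigma>] by (auto simp: theory_of_def)
      also have "\<dots> \<longleftrightarrow> \<phi> \<in> E"
        using E \<phi> unfolding stable_kernel_def ae_consequence_def M by auto
      finally show ?thesis .
    qed
    with Lf show ?case by auto
  qed auto
  with \<psi> show ?thesis
    using subf_self by blast
qed

lemma stable_kernel_stable_expansion:
  assumes \<Sigma>: "\<Sigma> \<subseteq> Bformulas B" and E: "stable_kernel \<Sigma> E"
  shows "has_stable_expansion B \<Sigma>"
proof -
  define M where "M = {v. \<forall>\<sigma>\<in>\<Sigma>. eval v (\<lambda>\<chi>. \<chi> \<in> E) \<sigma>}"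
  have "v \<in> M \<longleftrightarrow> (\<forall>\<sigma>\<in>\<Sigma>. world_eval M B v \<sigma>)" for v
  proof -
    have "eval v (\<lambda>\<chi>. \<chi> \<in> E) \<sigma> = eval v (\<lambda>\<chi>. \<chi> \<in> theory_of M B) \<sigma>" if "\<sigma> \<in> \<Sigma>" for \<sigma>
      by (rule eval_cong_Lf)
        (use that L_argsI theory_of_agrees_with_stable_kernel[OF \<Sigma> E M_def] in blast)
    then show ?thesis
      by (simp add: M_def eval_theory_of)
  qed
  then have "M = {v. \<forall>\<sigma>\<in>\<Sigma>. world_eval M B v \<sigma>}"
    by (intro set_eqI) simp
  moreover have "\<Sigma> \<subseteq> aelang B"
    using \<Sigma> Bformulas_subset_aelang by blast
  ultimately show ?thesis
    unfolding has_stable_expansion_def by (blast intro: stable_expansion_theory_of)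
qed

lemma has_stable_expansion_iff_stable_kernel:
  "\<Sigma> \<subseteq> Bformulas B \<Longrightarrow> has_stable_expansion B \<Sigma> \<longleftrightarrow> (\<exists>E. stable_kernel \<Sigma> E)"
  using stable_expansion_stable_kernel stable_kernel_stable_expansion
  unfolding has_stable_expansion_def by blast

section \<open>Monadic second-order formulae\<close>

definition MImp :: "mso \<Rightarrow> mso \<Rightarrow> mso" where "MImp a b = MNot (MAnd a (MNot b))"
definition MIff :: "mso \<Rightarrow> mso \<Rightarrow> mso" where "MIff a b = MAnd (MImp a b) (MImp b a)"
definition All1 :: "nat \<Rightarrow> mso \<Rightarrow> mso" where "All1 x a = MNot (Ex1 x (MNot a))"
definition All2 :: "nat \<Rightarrow> mso \<Rightarrow> mso" where "All2 X a = MNot (Ex2 X (MNot a))"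
definition MTrue :: mso where "MTrue = All1 0 (Eq 0 0)"

lemma sat_derived [simp]:
  "sat A I J (MImp a b) = (sat A I J a \<longrightarrow> sat A I J b)"
  "sat A I J (MIff a b) = (sat A I J a \<longleftrightarrow> sat A I J b)"
  "sat A I J (All1 x a) = (\<forall>u\<in>univ A. sat A (I(x := u)) J a)"
  "sat A I J (All2 X a) = (\<forall>S. S \<subseteq> univ A \<longrightarrow> sat A I (J(X := S)) a)"
  "sat A I J MTrue"
  by (auto simp: MImp_def MIff_def All1_def All2_def MTrue_def)

lemma fv_derived [simp]:
  "fv1 (MImp a b) = fv1 a \<union> fv1 b" "fv2 (MImp a b) = fv2 a \<union> fv2 b"
  "fv1 (MIff a b) = fv1 a \<union> fv1 b" "fv2 (MIff a b) = fv2 a \<union> fv2 b"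
  "fv1 (All1 x a) = fv1 a - {x}" "fv2 (All1 x a) = fv2 a"
  "fv1 (All2 X a) = fv1 a" "fv2 (All2 X a) = fv2 a - {X}"
  "fv1 MTrue = {}" "fv2 MTrue = {}"
  by (auto simp: MImp_def MIff_def All1_def All2_def MTrue_def)

lemma mso_over_derived [simp]:
  "mso_over B (MImp a b) = (mso_over B a \<and> mso_over B b)"
  "mso_over B (MIff a b) = (mso_over B a \<and> mso_over B b)"
  "mso_over B (All1 x a) = mso_over B a"
  "mso_over B (All2 X a) = mso_over B a"
  "mso_over B MTrue"
  by (auto simp: MImp_def MIff_def All1_def All2_def MTrue_def)

fun MConj :: "mso list \<Rightarrow> mso" where
  "MConj [] = MTrue"
| "MConj (a # as) = MAnd a (MConj as)"

lemma sat_MConj [simp]: "sat A I J (MConj as) = (\<forall>a\<in>set as. sat A I J a)"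
  by (induction as) auto

lemma fv_MConj [simp]:
  "fv1 (MConj as) = (\<Union>a\<in>set as. fv1 a)" "fv2 (MConj as) = (\<Union>a\<in>set as. fv2 a)"
  by (induction as) auto

lemma mso_over_MConj [simp]: "mso_over B (MConj as) = (\<forall>a\<in>set as. mso_over B a)"
  by (induction as) auto

text \<open>In the formulae below, first-order variable 0 is a node and 1, ..., arity f are its
  arguments; set variable 0 holds the guessed L-nodes E and set variable 1 a labelling T.
  The truth table branches on the membership in T of arguments k, ..., k + m - 1, the bits
  bs of the earlier arguments being already fixed (in reverse order).\<close>
fun truth_table :: "bf \<Rightarrow> nat \<Rightarrow> nat \<Rightarrow> bool list \<Rightarrow> mso" where
  "truth_table f 0 k bs = (if bfun f (rev bs) then Mem 0 1 else MNot (Mem 0 1))"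
| "truth_table f (Suc m) k bs =
     MAnd (MImp (Mem k 1) (truth_table f m (Suc k) (True # bs)))
          (MImp (MNot (Mem k 1)) (truth_table f m (Suc k) (False # bs)))"

lemma sat_truth_table:
  "sat A I J (truth_table f m k bs) \<longleftrightarrow>
     (I 0 \<in> J 1 \<longleftrightarrow> bfun f (rev bs @ map (\<lambda>i. I i \<in> J 1) [k..<k + m]))"
proof (induction m arbitrary: k bs)
  case (Suc m)
  have "[k..<Suc (k + m)] = k # [Suc k..<Suc (k + m)]"
    by (simp add: upt_conv_Cons)
  then show ?case
    by (cases "I k \<in> J 1") (simp_all add: Suc.IH del: upt_Suc)
qed auto

lemma fv1_truth_table: "fv1 (truth_table f m k bs) \<subseteq> insert 0 {k..<k + m}"
proof (induction m arbitrary: k bs)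
  case (Suc m)
  have "insert 0 {Suc k..<Suc k + m} \<subseteq> insert 0 {k..<k + Suc m}"
    by auto
  with Suc.IH[of "Suc k"] show ?case
    by auto
qed auto

lemma fv2_truth_table: "fv2 (truth_table f m k bs) \<subseteq> {1}"
  by (induction m arbitrary: k bs) auto

lemma mso_over_truth_table: "mso_over B (truth_table f m k bs)"
  by (induction m arbitrary: k bs) auto

fun forall_args :: "bf \<Rightarrow> nat \<Rightarrow> nat \<Rightarrow> mso \<Rightarrow> mso" where
  "forall_args f 0 k body = body"
| "forall_args f (Suc m) k body =
     All1 k (MImp (Rel2 (ConnR f k) k 0) (forall_args f m (Suc k) body))"

lemma fv1_forall_args: "fv1 (forall_args f m k body) \<subseteq> insert 0 (fv1 body - {k..<k + m})"
proof (induction m arbitrary: k)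
  case (Suc m)
  have "insert k (insert 0 (fv1 body - {Suc k..<Suc k + m})) - {k}
      \<subseteq> insert 0 (fv1 body - {k..<k + Suc m})"
    by auto
  with Suc.IH[of "Suc k"] show ?case
    by auto
qed auto

lemma fv2_forall_args: "fv2 (forall_args f m k body) = fv2 body"
  by (induction m arbitrary: k) auto

lemma mso_over_forall_args:
  "f \<in> B \<Longrightarrow> 1 \<le> k \<Longrightarrow> k + m \<le> arity f + 1 \<Longrightarrow> mso_over B body
    \<Longrightarrow> mso_over B (forall_args f m k body)"
  by (induction m arbitrary: k) (auto simp: binary_sym_def)

definition respects_conn :: "bf \<Rightarrow> mso" where
  "respects_conn f =
     (if arity f = 0 then MImp (Rel1 (ConstR f) 0) (truth_table f 0 1 [])
      else forall_args f (arity f) 1 (truth_table f (arity f) 1 []))"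

lemma fv1_respects_conn: "fv1 (respects_conn f) \<subseteq> {0}"
proof (cases "arity f = 0")
  case True
  then show ?thesis
    using fv1_truth_table[of f 0 1 "[]"] by (simp add: respects_conn_def)
next
  case False
  have "fv1 (forall_args f (arity f) 1 (truth_table f (arity f) 1 [])) \<subseteq> {0}"
    using fv1_forall_args[of f "arity f" 1] fv1_truth_table[of f "arity f" 1 "[]"] by auto
  with False show ?thesis
    by (simp add: respects_conn_def)
qed

lemma fv2_respects_conn: "fv2 (respects_conn f) \<subseteq> {1}"
  using fv2_truth_table by (simp add: respects_conn_def fv2_forall_args)

lemma mso_over_respects_conn: "f \<in> B \<Longrightarrow> mso_over B (respects_conn f)"
  by (auto simp: respects_conn_def mso_over_truth_table unary_sym_def intro!: mso_over_forall_args)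

definition coherent_mso :: "bf list \<Rightarrow> mso" where
  "coherent_mso fs =
     All1 0 (MAnd (MImp (Rel1 LR 0) (MIff (Mem 0 1) (Mem 0 0))) (MConj (map respects_conn fs)))"

definition contains_repr :: mso where
  "contains_repr = All1 0 (MImp (Rel1 ReprR 0) (Mem 0 1))"

text \<open>First-order variable 1 is an L-node z and 0 its argument x; the sentence says
  z \<in> E iff x \<in> T for all coherent labellings T containing \<Sigma>.\<close>
definition stable_expansion_mso :: "bf list \<Rightarrow> mso" where
  "stable_expansion_mso fs =
     Ex2 0 (All1 1 (MImp (Rel1 LR 1) (All1 0 (MImp (Rel2 LArgR 0 1)
       (MIff (Mem 1 0) (All2 1 (MImp (MAnd (coherent_mso fs) contains_repr) (Mem 0 1))))))))"

lemma sentence_stable_expansion_mso: "sentence (stable_expansion_mso fs)"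
  using fv1_respects_conn fv2_respects_conn
  by (fastforce simp: sentence_def stable_expansion_mso_def coherent_mso_def contains_repr_def)

lemma mso_over_stable_expansion_mso: "set fs \<subseteq> B \<Longrightarrow> mso_over B (stable_expansion_mso fs)"
  by (auto simp: stable_expansion_mso_def coherent_mso_def contains_repr_def
      mso_over_respects_conn unary_sym_def binary_sym_def)

lemma AUniv_cases:
  assumes "y \<in> AUniv \<Sigma>"
  shows "y \<in> (\<Union>\<sigma>\<in>\<Sigma>. subf \<sigma>) \<or> (\<exists>\<psi>. y = NegL \<psi> \<and> \<psi> \<in> L_args \<Sigma>)"
proof -
  obtain \<phi> where \<phi>: "\<phi> \<in> \<Sigma> \<or> (\<exists>\<psi>. \<phi> = NegL \<psi> \<and> \<psi> \<in> L_args \<Sigma>)" "y \<in> subf \<phi>"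
    using assms unfolding AUniv_def L_args_def by blast
  then show ?thesis
  proof (elim disjE exE conjE)
    fix \<psi> assume "\<phi> = NegL \<psi>" "\<psi> \<in> L_args \<Sigma>"
    moreover from \<open>\<psi> \<in> L_args \<Sigma>\<close> have "subf (Lf \<psi>) \<subseteq> (\<Union>\<sigma>\<in>\<Sigma>. subf \<sigma>)"
      unfolding L_args_def using subf_trans by blast
    ultimately show ?thesis
      using \<phi>(2) by (auto simp: NegL_def)
  qed blast
qed

lemma AUniv_subf_closed: "y \<in> AUniv \<Sigma> \<Longrightarrow> x \<in> subf y \<Longrightarrow> x \<in> AUniv \<Sigma>"
  unfolding AUniv_def using subf_trans by blast

lemma subset_AUniv: "\<Sigma> \<subseteq> AUniv \<Sigma>"
  unfolding AUniv_def using subf_self by blast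

lemma Lf_in_AUniv_iff: "Lf \<psi> \<in> AUniv \<Sigma> \<longleftrightarrow> \<psi> \<in> L_args \<Sigma>"
proof
  assume "Lf \<psi> \<in> AUniv \<Sigma>"
  then show "\<psi> \<in> L_args \<Sigma>"
    using AUniv_cases unfolding L_args_def by (fastforce simp: NegL_def)
next
  assume "\<psi> \<in> L_args \<Sigma>"
  then show "Lf \<psi> \<in> AUniv \<Sigma>"
    unfolding L_args_def AUniv_def by blast
qed

lemma L_args_subset_AUniv: "L_args \<Sigma> \<subseteq> AUniv \<Sigma>"
proof
  fix x assume "x \<in> L_args \<Sigma>"
  then have "Lf x \<in> AUniv \<Sigma>"
    by (simp add: Lf_in_AUniv_iff)
  then show "x \<in> AUniv \<Sigma>"
    by (rule AUniv_subf_closed) (simp add: subf_self)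
qed

lemma App_in_AUniv_args: "App f xs \<in> AUniv \<Sigma> \<Longrightarrow> set xs \<subseteq> AUniv \<Sigma>"
  using AUniv_subf_closed subf_self by fastforce

lemma App_in_AUniv_length:
  assumes "\<Sigma> \<subseteq> Bformulas B" "App f xs \<in> AUniv \<Sigma>" "f \<in> B"
  shows "length xs = arity f"
  using AUniv_cases[OF assms(2)] assms(1,3) wf_over_subf
  by (fastforce simp: Bformulas_def NegL_def neg_def arity_def)

lemma A_Sigma_simps [simp]:
  "univ (A_Sigma B \<Sigma>) = AUniv \<Sigma>" "rel1 (A_Sigma B \<Sigma>) = A_rel1 B \<Sigma>"
  "rel2 (A_Sigma B \<Sigma>) = A_rel2 B \<Sigma>"
  by (simp_all add: A_Sigma_def)

section \<open>Coherent labellings\<close>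

definition coherent :: "bf set \<Rightarrow> 'p aeform set \<Rightarrow> 'p aeform set \<Rightarrow> 'p aeform set \<Rightarrow> bool" where
  "coherent B U E T \<longleftrightarrow> (\<forall>y\<in>U.
     ((\<exists>\<psi>. y = Lf \<psi>) \<longrightarrow> (y \<in> T \<longleftrightarrow> y \<in> E)) \<and>
     (\<forall>f\<in>B. \<forall>xs. y = App f xs \<longrightarrow> (y \<in> T \<longleftrightarrow> bfun f (map (\<lambda>x. x \<in> T) xs))))"

lemma coherent_Lf: "coherent B U E T \<Longrightarrow> Lf \<psi> \<in> U \<Longrightarrow> Lf \<psi> \<in> T \<longleftrightarrow> Lf \<psi> \<in> E"
  unfolding coherent_def by blast

lemma coherent_App:
  "coherent B U E T \<Longrightarrow> App f xs \<in> U \<Longrightarrow> f \<in> B \<Longrightarrow>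
    App f xs \<in> T \<longleftrightarrow> bfun f (map (\<lambda>x. x \<in> T) xs)"
  unfolding coherent_def by blast

lemma coherent_eval:
  assumes "coherent B (AUniv \<Sigma>) E T"
  shows "y \<in> AUniv \<Sigma> \<Longrightarrow> wf_over B y \<Longrightarrow> y \<in> T \<longleftrightarrow> eval (\<lambda>p. Prop p \<in> T) (\<lambda>\<chi>. Lf \<chi> \<in> E) y"
proof (induction y)
  case (App f xs)
  have "x \<in> T \<longleftrightarrow> eval (\<lambda>p. Prop p \<in> T) (\<lambda>\<chi>. Lf \<chi> \<in> E) x" if "x \<in> set xs" for x
    using App that App_in_AUniv_args[OF App.prems(1)] by auto
  then have "map (\<lambda>x. x \<in> T) xs = map (eval (\<lambda>p. Prop p \<in> T) (\<lambda>\<chi>. Lf \<chi> \<in> E)) xs"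
    by (rule map_cong[OF refl])
  moreover have "App f xs \<in> T \<longleftrightarrow> bfun f (map (\<lambda>x. x \<in> T) xs)"
    using App.prems by (intro coherent_App[OF assms]) auto
  ultimately show ?case
    by (simp only: eval.simps)
qed (use coherent_Lf[OF assms] in simp_all)

lemma coherent_eval_labelling:
  "coherent B (AUniv \<Sigma>) E {y \<in> AUniv \<Sigma>. eval v (\<lambda>\<chi>. Lf \<chi> \<in> E) y}"
  (is "coherent B (AUniv \<Sigma>) E ?T")
  unfolding coherent_def
proof (intro ballI conjI impI allI)
  fix y assume y: "y \<in> AUniv \<Sigma>"
  then show "y \<in> ?T \<longleftrightarrow> y \<in> E" if "\<exists>\<psi>. y = Lf \<psi>"
    using that by auto
  fix f xs assume "y = App f xs"
  moreover from this y have "set xs \<subseteq> AUniv \<Sigma>"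
    using App_in_AUniv_args by blast
  then have "map (eval v (\<lambda>\<chi>. Lf \<chi> \<in> E)) xs = map (\<lambda>x. x \<in> ?T) xs"
    by (intro map_cong) auto
  ultimately show "y \<in> ?T \<longleftrightarrow> bfun f (map (\<lambda>x. x \<in> ?T) xs)"
    using y by (simp only: mem_Collect_eq eval.simps simp_thms)
qed

lemma coherent_labellings_consequence_iff:
  assumes \<Sigma>: "\<Sigma> \<subseteq> Bformulas B" and x: "x \<in> AUniv \<Sigma>" "wf_over B x"
  shows "(\<forall>T \<subseteq> AUniv \<Sigma>. coherent B (AUniv \<Sigma>) E T \<and> \<Sigma> \<subseteq> T \<longrightarrow> x \<in> T)
    \<longleftrightarrow> ae_consequence \<Sigma> {\<chi>. Lf \<chi> \<in> E} x"
  unfolding ae_consequence_def mem_Collect_eq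
proof (intro iffI allI impI)
  fix v assume H: "\<forall>T \<subseteq> AUniv \<Sigma>. coherent B (AUniv \<Sigma>) E T \<and> \<Sigma> \<subseteq> T \<longrightarrow> x \<in> T"
    and "\<forall>\<sigma>\<in>\<Sigma>. eval v (\<lambda>\<chi>. Lf \<chi> \<in> E) \<sigma>"
  then have "\<Sigma> \<subseteq> {y \<in> AUniv \<Sigma>. eval v (\<lambda>\<chi>. Lf \<chi> \<in> E) y}"
    using subset_AUniv by blast
  then have "x \<in> {y \<in> AUniv \<Sigma>. eval v (\<lambda>\<chi>. Lf \<chi> \<in> E) y}"
    using coherent_eval_labelling by (intro H[rule_format]) auto
  then show "eval v (\<lambda>\<chi>. Lf \<chi> \<in> E) x" by blast
next
  fix T assume cons: "\<forall>v. (\<forall>\<sigma>\<in>\<Sigma>. eval v (\<lambda>\<chi>. Lf \<chi> \<in> E) \<sigma>) \<longrightarrow> eval v (\<lambda>\<chi>. Lf \<chi> \<in> E) x"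
    and T: "T \<subseteq> AUniv \<Sigma>" "coherent B (AUniv \<Sigma>) E T \<and> \<Sigma> \<subseteq> T"
  have "eval (\<lambda>p. Prop p \<in> T) (\<lambda>\<chi>. Lf \<chi> \<in> E) \<sigma>" if "\<sigma> \<in> \<Sigma>" for \<sigma>
  proof -
    from that \<Sigma> have "wf_over B \<sigma>"
      by (auto simp: Bformulas_def)
    moreover from that T have "\<sigma> \<in> T" "\<sigma> \<in> AUniv \<Sigma>"
      by auto
    ultimately show ?thesis
      using coherent_eval[of B \<Sigma> E T \<sigma>] T(2) by blast
  qed
  with cons have "eval (\<lambda>p. Prop p \<in> T) (\<lambda>\<chi>. Lf \<chi> \<in> E) x"
    by blast
  then show "x \<in> T"
    using coherent_eval[of B \<Sigma> E T x] T(2) x by blast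
qed

lemma sat_forall_args:
  assumes "I 0 = App f xs" "set xs \<subseteq> AUniv \<Sigma>" "f \<in> B" "length xs = arity f"
    and "1 \<le> k" "k + m \<le> arity f + 1"
  shows "sat (A_Sigma B \<Sigma>) I J (forall_args f m k body) \<longleftrightarrow>
    sat (A_Sigma B \<Sigma>) (\<lambda>i. if k \<le> i \<and> i < k + m then xs ! (i - 1) else I i) J body"
  using assms
proof (induction m arbitrary: k I)
  case 0
  have "(\<lambda>i. if k \<le> i \<and> i < k + 0 then xs ! (i - 1) else I i) = I"
    by (rule ext) (simp add: not_le[symmetric])
  then show ?case by simp
next
  case (Suc m)
  let ?a = "xs ! (k - 1)"
  have "?a \<in> AUniv \<Sigma>"
    using Suc.prems by (auto intro: nth_mem)
  have rel: "A_rel2 B \<Sigma> (ConnR f k) u (I 0) \<longleftrightarrow> u = ?a" for u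
    using Suc.prems by auto
  have "sat (A_Sigma B \<Sigma>) I J (forall_args f (Suc m) k body) \<longleftrightarrow>
      (\<forall>u\<in>AUniv \<Sigma>. A_rel2 B \<Sigma> (ConnR f k) u (I 0) \<longrightarrow>
         sat (A_Sigma B \<Sigma>) (I(k := u)) J (forall_args f m (Suc k) body))"
    using Suc.prems by (simp del: A_rel2.simps)
  also have "\<dots> \<longleftrightarrow> sat (A_Sigma B \<Sigma>) (I(k := ?a)) J (forall_args f m (Suc k) body)"
    unfolding rel using \<open>?a \<in> AUniv \<Sigma>\<close> by blast
  also have "\<dots> \<longleftrightarrow> sat (A_Sigma B \<Sigma>)
      (\<lambda>i. if Suc k \<le> i \<and> i < Suc k + m then xs ! (i - 1) else (I(k := ?a)) i) J body"
    using Suc.prems by (intro Suc.IH) auto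
  also have "(\<lambda>i. if Suc k \<le> i \<and> i < Suc k + m then xs ! (i - 1) else (I(k := ?a)) i)
      = (\<lambda>i. if k \<le> i \<and> i < k + Suc m then xs ! (i - 1) else I i)"
    by (auto simp: fun_eq_iff)
  finally show ?case .
qed

lemma sat_respects_conn:
  assumes \<Sigma>: "\<Sigma> \<subseteq> Bformulas B" and f: "f \<in> B" and y: "I 0 \<in> AUniv \<Sigma>"
  shows "sat (A_Sigma B \<Sigma>) I J (respects_conn f) \<longleftrightarrow>
    (\<forall>xs. I 0 = App f xs \<longrightarrow> (I 0 \<in> J 1 \<longleftrightarrow> bfun f (map (\<lambda>x. x \<in> J 1) xs)))"
proof (cases "\<exists>xs. I 0 = App f xs")
  case True
  then obtain xs where xs: "I 0 = App f xs" ..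
  with y \<Sigma> f have len: "length xs = arity f" and "set xs \<subseteq> AUniv \<Sigma>"
    using App_in_AUniv_length App_in_AUniv_args by metis+
  show ?thesis
  proof (cases "arity f = 0")
    case True
    with xs len f show ?thesis
      by (simp add: respects_conn_def sat_truth_table)
  next
    case False
    let ?I = "\<lambda>i. if 1 \<le> i \<and> i < 1 + arity f then xs ! (i - 1) else I i"
    have "map (\<lambda>i. ?I i \<in> J 1) [1..<1 + arity f] = map (\<lambda>x. x \<in> J 1) xs"
      by (rule nth_equalityI) (use len in \<open>auto simp del: upt_Suc\<close>)
    then have "sat (A_Sigma B \<Sigma>) ?I J (truth_table f (arity f) 1 [])
        \<longleftrightarrow> (I 0 \<in> J 1 \<longleftrightarrow> bfun f (map (\<lambda>x. x \<in> J 1) xs))"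
      by (simp only: sat_truth_table) simp
    moreover have "sat (A_Sigma B \<Sigma>) I J (respects_conn f)
        \<longleftrightarrow> sat (A_Sigma B \<Sigma>) ?I J (truth_table f (arity f) 1 [])"
      using False xs len f \<open>set xs \<subseteq> AUniv \<Sigma>\<close>
      by (simp add: respects_conn_def sat_forall_args)
    ultimately show ?thesis
      using xs by simp
  qed
next
  case False
  then have "\<not> A_rel1 B \<Sigma> (ConstR f) (I 0)" "\<not> A_rel2 B \<Sigma> (ConnR f 1) u (I 0)" for u
    by auto
  with False show ?thesis
    by (cases "arity f") (simp_all add: respects_conn_def)
qed

lemma sat_coherent_mso:
  assumes "\<Sigma> \<subseteq> Bformulas B" and "set fs = B"
  shows "sat (A_Sigma B \<Sigma>) I J (coherent_mso fs) \<longleftrightarrow> coherent B (AUniv \<Sigma>) (J 0) (J 1)"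
  unfolding coherent_mso_def coherent_def using sat_respects_conn[OF assms(1)] assms(2)
  by simp

lemma sat_contains_repr: "sat (A_Sigma B \<Sigma>) I J contains_repr \<longleftrightarrow> \<Sigma> \<subseteq> J 1"
  using subset_AUniv by (auto simp: contains_repr_def)

lemma models_stable_expansion_mso_iff:
  assumes \<Sigma>: "\<Sigma> \<subseteq> Bformulas B" and "set fs = B"
  shows "A_Sigma B \<Sigma> \<Turnstile> stable_expansion_mso fs \<longleftrightarrow>
    (\<exists>E \<subseteq> AUniv \<Sigma>. stable_kernel \<Sigma> {\<chi>. Lf \<chi> \<in> E})"
proof -
  have L_nodes: "(\<forall>z\<in>AUniv \<Sigma>. (\<exists>\<psi>. z = Lf \<psi>) \<longrightarrow> (\<forall>x\<in>AUniv \<Sigma>. z = Lf x \<longrightarrow> P x))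
      \<longleftrightarrow> (\<forall>x\<in>L_args \<Sigma>. P x)" for P
    using Lf_in_AUniv_iff L_args_subset_AUniv by blast
  have "A_Sigma B \<Sigma> \<Turnstile> stable_expansion_mso fs \<longleftrightarrow> (\<exists>E \<subseteq> AUniv \<Sigma>. \<forall>x\<in>L_args \<Sigma>.
      Lf x \<in> E \<longleftrightarrow> (\<forall>T \<subseteq> AUniv \<Sigma>. coherent B (AUniv \<Sigma>) E T \<and> \<Sigma> \<subseteq> T \<longrightarrow> x \<in> T))"
    by (simp add: models_def stable_expansion_mso_def sat_coherent_mso[OF assms] sat_contains_repr
      L_nodes)
  also have "\<dots> \<longleftrightarrow> (\<exists>E \<subseteq> AUniv \<Sigma>. stable_kernel \<Sigma> {\<chi>. Lf \<chi> \<in> E})"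
    using coherent_labellings_consequence_iff[OF \<Sigma> subsetD[OF L_args_subset_AUniv]]
      L_args_wf_over[OF \<Sigma>]
    by (simp add: stable_kernel_def)
  finally show ?thesis .
qed

lemma ex_stable_kernel_iff_AUniv:
  "(\<exists>E. stable_kernel \<Sigma> E) \<longleftrightarrow> (\<exists>E \<subseteq> AUniv \<Sigma>. stable_kernel \<Sigma> {\<chi>. Lf \<chi> \<in> E})"
proof
  assume "\<exists>E. stable_kernel \<Sigma> E"
  then obtain E where "stable_kernel \<Sigma> E" ..
  then have "stable_kernel \<Sigma> (E \<inter> L_args \<Sigma>)"
    using stable_kernel_cong[of \<Sigma> "E \<inter> L_args \<Sigma>" E] by blast
  moreover have "{\<chi>. Lf \<chi> \<in> Lf ` (E \<inter> L_args \<Sigma>)} = E \<inter> L_args \<Sigma>"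
    by blast
  moreover have "Lf ` (E \<inter> L_args \<Sigma>) \<subseteq> AUniv \<Sigma>"
    using Lf_in_AUniv_iff by blast
  ultimately show "\<exists>E \<subseteq> AUniv \<Sigma>. stable_kernel \<Sigma> {\<chi>. Lf \<chi> \<in> E}"
    by metis
next
  assume "\<exists>E \<subseteq> AUniv \<Sigma>. stable_kernel \<Sigma> {\<chi>. Lf \<chi> \<in> E}"
  then show "\<exists>E. stable_kernel \<Sigma> E" by blast
qed

theorem lemma4:
  fixes B :: "bf set"
  assumes "finite B"
  shows "\<exists>\<theta>. mso_over B \<theta> \<and> sentence \<theta> \<and>
           (\<forall>\<Sigma> :: 'p aeform set. \<Sigma> \<subseteq> Bformulas B \<longrightarrow>
              (has_stable_expansion B \<Sigma> \<longleftrightarrow> A_Sigma B \<Sigma> \<Turnstile> \<theta>))"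
proof -
  obtain fs where fs: "set fs = B"
    using finite_list[OF assms] ..
  have "has_stable_expansion B \<Sigma> \<longleftrightarrow> A_Sigma B \<Sigma> \<Turnstile> stable_expansion_mso fs"
    if "\<Sigma> \<subseteq> Bformulas B" for \<Sigma> :: "'p aeform set"
    using that fs by (simp add: has_stable_expansion_iff_stable_kernel ex_stable_kernel_iff_AUniv
      models_stable_expansion_mso_iff)
  moreover have "mso_over B (stable_expansion_mso fs)"
    using fs mso_over_stable_expansion_mso by blast
  ultimately show ?thesis
    using sentence_stable_expansion_mso by blast
qed

end
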